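(* Let $(X,\mathcal{S})$ be a finite set system with $|X|=n=2^k$ for an integer $k\ge1$, and let the packings $\mathcal{F}_j$, the chains $F_j(S)$, the classes $\mathcal{S}_i$ and the families $\mathcal{F}_j^i$ be as defined in the context. Then for every $1\le i\le k$, every $S\in\mathcal{S}_i$ and every $j$ with $i-1\le j\le k$, $$|S\triangle F_j(S)|<\frac{n}{2^{j-1}} .$$
   Context: $\triangle$ denotes symmetric difference. Construction: set $\mathcal{F}_0=\{\emptyset\}$, and for $j=1,\dots,k$ let $\mathcal{F}_j\subseteq\mathcal{S}$ be a family that is maximal under inclusion subject to $|F\triangle F'|>n/2^j$ for all distinct $F,F'\in\mathcal{F}_j$. For $S\in\mathcal{S}$ define the nearest-neighbor chain $F_k(S):=S$ and, for $j=k,k-1,\dots,1$, let $F_{j-1}(S)$ be an element of $\mathcal{F}_{j-1}$ minimizing $|F_j(S)\triangle F|$ over $F\in\mathcal{F}_{j-1}$. For $i=1,\dots,k$ let $\mathcal{S}_i=\{S\in\mathcal{S}: n/2^i\le|S|<n/2^{i-1}\}$, and for $j=i-1,\dots,k$ let $\mathcal{F}_j^i=\{F_j(S):S\in\mathcal{S}_i\}$. *)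

theory Defs
  imports Complex_Main
begin

definition sep_family :: "'a set set \<Rightarrow> real \<Rightarrow> 'a set set \<Rightarrow> bool" where
  "sep_family SS r P \<longleftrightarrow> P \<subseteq> SS \<and>
     (\<forall>F\<in>P. \<forall>F'\<in>P. F \<noteq> F' \<longrightarrow> real (card (sym_diff F F')) > r)"

definition maximal_sep_family :: "'a set set \<Rightarrow> real \<Rightarrow> 'a set set \<Rightarrow> bool" where
  "maximal_sep_family SS r P \<longleftrightarrow> sep_family SS r P \<and>
     (\<forall>Q. sep_family SS r Q \<and> P \<subseteq> Q \<longrightarrow> Q = P)"

end

theory Submission
  imports Defs
begin

text \<open>Maximality of the packing F_j makes it an (n/2^j)-net of the system, so each step
  F_l(S) to F_(l-1)(S) of the nearest-neighbour chain moves by at most n/2^(l-1). By the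
  triangle inequality for the size of the symmetric difference, |S \<triangle> F_j(S)| is at most the
  geometric tail sum over j < l \<le> k of n/2^(l-1), which equals n(2/2^j - 2/2^k) < n/2^(j-1).\<close>

lemma maximal_sep_family_covers:
  assumes "maximal_sep_family SS r P" "S \<in> SS" "r \<ge> 0"
  shows "\<exists>F\<in>P. real (card (sym_diff S F)) \<le> r"
proof (rule ccontr)
  assume far: "\<not> ?thesis"
  then have "S \<notin> P" using assms(3) by fastforce
  moreover have "sep_family SS r (insert S P)"
    using assms(1,2) far unfolding maximal_sep_family_def sep_family_def
    by (auto simp: Un_commute not_le)
  then have "insert S P = P" using assms(1) unfolding maximal_sep_family_def by blast
  ultimately show False by blast
qed

lemma card_sym_diff_triangle:
  assumes "finite A" "finite B" "finite C"
  shows "card (sym_diff A C) \<le> card (sym_diff A B) + card (sym_diff B C)"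
proof -
  have "card (sym_diff A C) \<le> card (sym_diff A B \<union> sym_diff B C)"
    by (rule card_mono) (use assms in auto)
  also have "\<dots> \<le> card (sym_diff A B) + card (sym_diff B C)" by (rule card_Un_le)
  finally show ?thesis .
qed

lemma card_sym_diff_telescope:
  fixes c :: "nat \<Rightarrow> 'a set"
  assumes "j \<le> k" "\<And>l. j \<le> l \<Longrightarrow> l \<le> k \<Longrightarrow> finite (c l)"
  shows "card (sym_diff (c k) (c j)) \<le> (\<Sum>l\<in>{j<..k}. card (sym_diff (c l) (c (l - 1))))"
  using assms
proof (induction k)
  case 0
  then show ?case by simp
next
  case (Suc k)
  show ?case
  proof (cases "j = Suc k")
    case True
    then show ?thesis by simp
  next
    case False
    then have j: "j \<le> k" using Suc.prems(1) by simp
    have "card (sym_diff (c (Suc k)) (c j))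
        \<le> card (sym_diff (c (Suc k)) (c k)) + card (sym_diff (c k) (c j))"
      by (rule card_sym_diff_triangle) (use j Suc.prems(2) in auto)
    also have "\<dots> \<le> card (sym_diff (c (Suc k)) (c k))
        + (\<Sum>l\<in>{j<..k}. card (sym_diff (c l) (c (l - 1))))"
      using Suc.IH j Suc.prems(2) by simp
    also have "\<dots> = (\<Sum>l\<in>{j<..Suc k}. card (sym_diff (c l) (c (l - 1))))"
      using j by (simp add: atLeastSucAtMost_greaterThanAtMost[symmetric] add.commute)
    finally show ?thesis .
  qed
qed

lemma sum_inverse_powers_of_two:
  assumes "j \<le> k"
  shows "(\<Sum>l\<in>{j<..k}. 1 / 2 ^ (l - 1) :: real) = 2 / 2 ^ j - 2 / 2 ^ k"
  using assms
proof (induction k)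
  case 0
  then show ?case by simp
next
  case (Suc k)
  show ?case
  proof (cases "j = Suc k")
    case True
    then show ?thesis by simp
  next
    case False
    then have "j \<le> k" using Suc.prems by simp
    then have "(\<Sum>l\<in>{j<..Suc k}. 1 / 2 ^ (l - 1) :: real) = 2 / 2 ^ j - 2 / 2 ^ k + 1 / 2 ^ k"
      using Suc.IH by (simp add: atLeastSucAtMost_greaterThanAtMost[symmetric])
    then show ?thesis by simp
  qed
qed

locale nearest_neighbour_chain =
  fixes X :: "'a set" and SS :: "'a set set" and n k :: nat
    and Fam :: "nat \<Rightarrow> 'a set set" and ch :: "nat \<Rightarrow> 'a set \<Rightarrow> 'a set"
  assumes finite_X: "finite X"
    and SS_subset: "SS \<subseteq> Pow X"
    and k_pos: "k \<ge> 1"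
    and card_X: "card X = n"
    and Fam_0: "Fam 0 = {{}}"
    and Fam_maximal: "\<And>j. 1 \<le> j \<Longrightarrow> j \<le> k \<Longrightarrow> maximal_sep_family SS (real n / 2 ^ j) (Fam j)"
    and ch_top: "\<And>S. S \<in> SS \<Longrightarrow> ch k S = S"
    and ch_step: "\<And>S j. S \<in> SS \<Longrightarrow> 1 \<le> j \<Longrightarrow> j \<le> k \<Longrightarrow>
        ch (j - 1) S \<in> Fam (j - 1) \<and>
        (\<forall>F\<in>Fam (j - 1). card (sym_diff (ch j S) (ch (j - 1) S)) \<le> card (sym_diff (ch j S) F))"
begin

lemma ch_in_SS:
  assumes "S \<in> SS" "1 \<le> l" "l \<le> k"
  shows "ch l S \<in> SS"
proof (cases "l = k")
  case True
  then show ?thesis using ch_top assms(1) by simp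
next
  case False
  have "ch l S \<in> Fam l" using ch_step[OF assms(1), of "Suc l"] assms False by simp
  moreover have "Fam l \<subseteq> SS"
    using Fam_maximal[OF assms(2)] assms(3)
    unfolding maximal_sep_family_def sep_family_def by simp
  ultimately show ?thesis by blast
qed

lemma finite_ch:
  assumes "S \<in> SS" "l \<le> k"
  shows "finite (ch l S)"
proof (cases "l = 0")
  case True
  then show ?thesis using ch_step[OF assms(1), of 1] k_pos Fam_0 by simp
next
  case False
  then show ?thesis
    using ch_in_SS[OF assms(1), of l] assms(2) SS_subset finite_X by (auto intro: finite_subset)
qed

lemma card_sym_diff_ch_step:
  assumes S: "S \<in> SS" and l: "1 \<le> l" "l \<le> k"
  shows "real (card (sym_diff (ch l S) (ch (l - 1) S))) \<le> real n / 2 ^ (l - 1)"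
proof -
  have chS: "ch l S \<in> SS" using ch_in_SS[OF S l] .
  obtain F where F: "F \<in> Fam (l - 1)" "real (card (sym_diff (ch l S) F)) \<le> real n / 2 ^ (l - 1)"
  proof (cases "l = 1")
    case True
    have "card (ch l S) \<le> n"
      using chS SS_subset card_X finite_X card_mono by blast
    then show ?thesis using that[of "{}"] True Fam_0 by simp
  next
    case False
    then have "maximal_sep_family SS (real n / 2 ^ (l - 1)) (Fam (l - 1))"
      using Fam_maximal[of "l - 1"] l by simp
    from maximal_sep_family_covers[OF this chS] show ?thesis using that by auto
  qed
  moreover have "card (sym_diff (ch l S) (ch (l - 1) S)) \<le> card (sym_diff (ch l S) F)"
    using ch_step[OF S l] F(1) by blast
  ultimately show ?thesis by linarith
qed

lemma card_sym_diff_ch_le: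
  assumes S: "S \<in> SS" and j: "j \<le> k"
  shows "real (card (sym_diff S (ch j S))) \<le> real n * (2 / 2 ^ j - 2 / 2 ^ k)"
proof -
  have "card (sym_diff S (ch j S)) \<le> (\<Sum>l\<in>{j<..k}. card (sym_diff (ch l S) (ch (l - 1) S)))"
    using card_sym_diff_telescope[of j k "\<lambda>l. ch l S"] j finite_ch[OF S] ch_top[OF S] by simp
  then have "real (card (sym_diff S (ch j S)))
      \<le> (\<Sum>l\<in>{j<..k}. real (card (sym_diff (ch l S) (ch (l - 1) S))))"
    unfolding of_nat_sum[symmetric] of_nat_le_iff .
  also have "\<dots> \<le> (\<Sum>l\<in>{j<..k}. real n * (1 / 2 ^ (l - 1)))"
  proof (rule sum_mono)
    fix l
    assume "l \<in> {j<..k}"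
    then show "real (card (sym_diff (ch l S) (ch (l - 1) S))) \<le> real n * (1 / 2 ^ (l - 1))"
      using card_sym_diff_ch_step[OF S, of l] by simp
  qed
  also have "\<dots> = real n * (2 / 2 ^ j - 2 / 2 ^ k)"
    by (simp only: sum_distrib_left[symmetric] sum_inverse_powers_of_two[OF j])
  finally show ?thesis .
qed

end

theorem mainTheorem5:
  fixes X :: "'a set" and SS :: "'a set set" and n k :: nat
    and Fam :: "nat \<Rightarrow> 'a set set" and ch :: "nat \<Rightarrow> 'a set \<Rightarrow> 'a set"
  assumes finX: "finite X"
    and SSX: "SS \<subseteq> Pow X"
    and k1: "k \<ge> 1"
    and cardX: "card X = n" and n_def: "n = 2 ^ k"
    and Fam0: "Fam 0 = {{}}"
    and Famj: "\<And>j. 1 \<le> j \<Longrightarrow> j \<le> k \<Longrightarrow> maximal_sep_family SS (real n / 2 ^ j) (Fam j)"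
    and ch_top: "\<And>S. S \<in> SS \<Longrightarrow> ch k S = S"
    and ch_step: "\<And>S j. S \<in> SS \<Longrightarrow> 1 \<le> j \<Longrightarrow> j \<le> k \<Longrightarrow>
        ch (j - 1) S \<in> Fam (j - 1) \<and>
        (\<forall>F\<in>Fam (j - 1). card (sym_diff (ch j S) (ch (j - 1) S)) \<le> card (sym_diff (ch j S) F))"
  shows "\<forall>i. 1 \<le> i \<and> i \<le> k \<longrightarrow>
           (\<forall>S\<in>{S \<in> SS. real n / 2 ^ i \<le> real (card S) \<and> real (card S) < real n / 2 powr (real i - 1)}.
             (\<forall>j. i - 1 \<le> j \<and> j \<le> k \<longrightarrow>
                real (card (sym_diff S (ch j S))) < real n / 2 powr (real j - 1)))"
proof (intro allI impI ballI)
  interpret nearest_neighbour_chain X SS n k Fam ch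
    using assms by unfold_locales
  fix i S j
  assume "S \<in> {S \<in> SS. real n / 2 ^ i \<le> real (card S) \<and> real (card S) < real n / 2 powr (real i - 1)}"
    and "i - 1 \<le> j \<and> j \<le> k"
  then have S: "S \<in> SS" and j: "j \<le> k" by auto
  have "real (card (sym_diff S (ch j S))) \<le> real n * (2 / 2 ^ j - 2 / 2 ^ k)"
    using card_sym_diff_ch_le[OF S j] .
  also have "\<dots> < real n * (2 / 2 ^ j)"
    using n_def by (intro mult_strict_left_mono) auto
  also have "\<dots> = real n / 2 powr (real j - 1)"
    by (simp add: powr_diff powr_realpow)
  finally show "real (card (sym_diff S (ch j S))) < real n / 2 powr (real j - 1)" .
qed

end
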